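(* Fix positive integers $k,x^*$, a real number $n'$ treated as an indeterminate, and real numbers $b_1,\dots,b_k$ (indices mod $k$). For $x=(x_1,\dots,x_k)\in\{0,\dots,x^*\}^k$ consider $$E_x(n')=\sum_{i=1}^{k}\prod_{j=1}^{k}\prod_{h=x_j+1}^{x^*}(n'-b_{j+i}+h),$$ a polynomial in $n'$ of degree $L=\sum_{j=1}^k(x^*-x_j)$. Then for every integer $m\ge 0$, the coefficient of $n'^{\,L-m}$ in $E_x(n')$ is a linear combination of cyclic statistics of $x$ of order at most $m$, each multiplied by some function of $x$ that is invariant under permutations of $(x_1,\dots,x_k)$ (these functions and the statistics used may depend on $b$ and $x^*$ but are the same for all $x$).
   Context: For indices $i_1,\dots,i_r$ (mod $k$), the cyclic statistic of order $r$ is $S_{i_1,\dots,i_r}(x)=\sum_{j=1}^{k}x_{i_1+j}\cdots x_{i_r+j}$; a cyclic statistic of order $0$ is understood as a constant. *)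

theory Defs
  imports "HOL-Computational_Algebra.Polynomial" "HOL-Library.Multiset"
begin

text \<open>Vectors x = (x_1,...,x_k) are lists of length k, indexed 0..k-1; all indices are taken mod k.\<close>

definition cyc_stat :: "nat \<Rightarrow> nat list \<Rightarrow> nat list \<Rightarrow> real" where
  "cyc_stat k is x = (\<Sum>j<k. \<Prod>l<length is. real (x ! ((is ! l + j) mod k)))"

definition E_poly :: "nat \<Rightarrow> nat \<Rightarrow> (nat \<Rightarrow> real) \<Rightarrow> nat list \<Rightarrow> real poly" where
  "E_poly k xs b x = (\<Sum>i<k. \<Prod>j<k. \<Prod>h\<in>{x ! j + 1..xs}. [: real h - b ((j + i) mod k), 1 :])"

definition L_deg :: "nat \<Rightarrow> nat \<Rightarrow> nat list \<Rightarrow> nat" where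
  "L_deg k xs x = (\<Sum>j<k. xs - x ! j)"

definition perm_invariant :: "(nat list \<Rightarrow> real) \<Rightarrow> bool" where
  "perm_invariant c \<longleftrightarrow> (\<forall>y z. mset y = mset z \<longrightarrow> c y = c z)"

end

theory Submission
  imports Defs
begin

text \<open>
  The i-th summand of E_poly is the monic polynomial \<Prod>(n' + a) over the constants
  a = h - b_{j+i} (j < k, x_j < h \<le> x*), so its coefficient of n'^(L-m) is the elementary
  symmetric function e_m of these constants. By Newton's identities e_m is a polynomial of
  weighted degree m in the power sums p_r, r \<le> m. Expanding (h - b_{j+i})^r binomially and
  summing over h by Faulhaber's formula writes p_r as a sum over j of b-dependent weights times
  polynomials of degree \<le> r in x_j, except for the top binomial term, whose weight is 1 and
  which is therefore symmetric in x. After the substitution j = a - i, e_m becomes a polynomial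
  of degree \<le> m in the rotated coordinates x_{a-i} with symmetric coefficients, and summing
  over i turns every rotated monomial into a cyclic statistic.
\<close>

section \<open>Elementary symmetric functions and Newton's identities\<close>

fun esym :: "'a::comm_semiring_1 list \<Rightarrow> nat \<Rightarrow> 'a" where
  "esym U 0 = 1"
| "esym [] (Suc m) = 0"
| "esym (a # U) (Suc m) = esym U (Suc m) + a * esym U m"

definition psum :: "'a::comm_semiring_1 list \<Rightarrow> nat \<Rightarrow> 'a" where
  "psum U r = (\<Sum>a\<leftarrow>U. a ^ r)"

lemma esym_eq_0: "length U < m \<Longrightarrow> esym U m = 0"
  by (induction U m rule: esym.induct) auto

lemma esym_Cons: "esym (a # U) m = esym U m + (if m = 0 then 0 else a * esym U (m - 1))"
  by (cases m) simp_all

lemma psum_Cons [simp]: "psum (a # U) r = a ^ r + psum U r"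
  by (simp add: psum_def)

lemma psum_concat: "psum (concat Us) r = (\<Sum>U\<leftarrow>Us. psum U r)"
  by (induction Us) (simp_all add: psum_def)

lemma coeff_prod_linear_factors:
  "coeff (\<Prod>a\<leftarrow>U. [:a, 1:]) n = (if n \<le> length U then esym U (length U - n) else 0)"
proof (induction U arbitrary: n)
  case Nil
  then show ?case by (cases n) simp_all
next
  case (Cons a U)
  have "[:a, 1:] * p = smult a p + pCons 0 p" for p :: "'a poly"
    by (simp add: mult_pCons_left)
  then show ?case
    using Cons.IH by (cases n) (auto simp: esym_eq_0 Suc_diff_le esym_Cons add.commute simp del: esym.simps(3))
qed

lemma esym_Cons_alternating_sum:
  fixes a :: "'a::comm_ring_1"
  shows "(\<Sum>r\<le>n. (-1) ^ r * esym (a # U) (n - r) * a ^ Suc r) = a * esym U n"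
proof (induction n)
  case 0
  show ?case by simp
next
  case (Suc n)
  have "(\<Sum>r\<le>Suc n. (-1) ^ r * esym (a # U) (Suc n - r) * a ^ Suc r)
      = esym (a # U) (Suc n) * a - a * (\<Sum>r\<le>n. (-1) ^ r * esym (a # U) (n - r) * a ^ Suc r)"
    by (subst sum.atMost_Suc_shift) (simp add: sum_distrib_left sum_negf algebra_simps del: esym.simps)
  also have "\<dots> = a * esym U (Suc n)"
    by (simp only: Suc.IH) (simp add: algebra_simps)
  finally show ?case .
qed

lemma newton_identity:
  fixes U :: "'a::comm_ring_1 list"
  shows "of_nat (Suc n) * esym U (Suc n) = (\<Sum>r\<le>n. (-1) ^ r * esym U (n - r) * psum U (Suc r))"
proof (induction U arbitrary: n)
  case Nil
  then show ?case by (simp add: psum_def)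
next
  case (Cons a U)
  let ?lower = "\<lambda>r. if n - r = 0 then 0 else a * esym U (n - r - 1)"
  have lower_sum: "(\<Sum>r\<le>n. (-1) ^ r * ?lower r * psum U (Suc r)) = a * of_nat n * esym U n"
  proof (cases n)
    case (Suc n')
    then have "(\<Sum>r\<le>n. (-1) ^ r * ?lower r * psum U (Suc r))
        = a * (\<Sum>r\<le>n'. (-1) ^ r * esym U (n' - r) * psum U (Suc r))"
      by (simp add: sum.atMost_Suc sum_distrib_left Suc_diff_le mult_ac)
    then show ?thesis
      using Cons.IH[of n'] Suc by (simp add: mult.assoc)
  qed simp
  have "(\<Sum>r\<le>n. (-1) ^ r * esym (a # U) (n - r) * psum (a # U) (Suc r))
      = (\<Sum>r\<le>n. (-1) ^ r * esym (a # U) (n - r) * a ^ Suc r)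
        + (\<Sum>r\<le>n. (-1) ^ r * esym (a # U) (n - r) * psum U (Suc r))"
    by (simp add: sum.distrib[symmetric] distrib_left del: esym.simps power_Suc)
  also have "(\<Sum>r\<le>n. (-1) ^ r * esym (a # U) (n - r) * psum U (Suc r))
      = (\<Sum>r\<le>n. (-1) ^ r * esym U (n - r) * psum U (Suc r))
        + (\<Sum>r\<le>n. (-1) ^ r * ?lower r * psum U (Suc r))"
    by (simp add: esym_Cons sum.distrib[symmetric] algebra_simps del: esym.simps)
  also have "(\<Sum>r\<le>n. (-1) ^ r * esym (a # U) (n - r) * a ^ Suc r)
      + ((\<Sum>r\<le>n. (-1) ^ r * esym U (n - r) * psum U (Suc r))
        + (\<Sum>r\<le>n. (-1) ^ r * ?lower r * psum U (Suc r)))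
      = a * esym U n + (of_nat (Suc n) * esym U (Suc n) + a * of_nat n * esym U n)"
    by (simp only: esym_Cons_alternating_sum Cons.IH lower_sum)
  also have "\<dots> = of_nat (Suc n) * esym (a # U) (Suc n)"
    by (simp add: algebra_simps)
  finally show ?case ..
qed

lemma esym_Suc_newton:
  fixes U :: "'a::field_char_0 list"
  shows "esym U (Suc n) = (\<Sum>r\<le>n. (-1) ^ r / of_nat (Suc n) * esym U (n - r) * psum U (Suc r))"
proof -
  have "esym U (Suc n) = (of_nat (Suc n) * esym U (Suc n)) / of_nat (Suc n)"
    by (simp del: of_nat_Suc)
  also have "\<dots> = (\<Sum>r\<le>n. (-1) ^ r / of_nat (Suc n) * esym U (n - r) * psum U (Suc r))"
    by (simp only: newton_identity sum_divide_distrib) (simp add: field_simps)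
  finally show ?thesis .
qed

section \<open>Sums of powers\<close>

lemma power_Suc_eq_sum_power_sums:
  "(of_nat n :: 'a::comm_ring_1) ^ Suc s = (\<Sum>t\<le>s. of_nat (Suc s choose t) * (\<Sum>h<n. of_nat h ^ t))"
proof -
  have "(of_nat n :: 'a) ^ Suc s = (\<Sum>h<n. of_nat (Suc h) ^ Suc s - of_nat h ^ Suc s)"
    by (subst sum_lessThan_telescope) simp
  also have "\<dots> = (\<Sum>h<n. \<Sum>t\<le>s. of_nat (Suc s choose t) * of_nat h ^ t)"
  proof (rule sum.cong [OF refl])
    fix h
    have "(of_nat (Suc h) :: 'a) ^ Suc s = (\<Sum>t\<le>Suc s. of_nat (Suc s choose t) * of_nat h ^ t)"
      using binomial_ring [of "of_nat h :: 'a" 1 "Suc s"] by (simp add: add.commute)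
    then show "(of_nat (Suc h) :: 'a) ^ Suc s - of_nat h ^ Suc s = (\<Sum>t\<le>s. of_nat (Suc s choose t) * of_nat h ^ t)"
      by (simp add: sum.atMost_Suc del: power_Suc)
  qed
  also have "\<dots> = (\<Sum>t\<le>s. of_nat (Suc s choose t) * (\<Sum>h<n. of_nat h ^ t))"
    by (subst sum.swap) (simp add: sum_distrib_left)
  finally show ?thesis .
qed

lemma sum_powers_polynomial:
  "\<exists>q :: 'a::field_char_0 poly. degree q \<le> Suc s \<and> (\<forall>n. (\<Sum>h<n. of_nat h ^ s) = poly q (of_nat n))"
proof (induction s rule: less_induct)
  case (less s)
  then obtain Q :: "nat \<Rightarrow> 'a poly" where
    Q: "\<And>t. t < s \<Longrightarrow> degree (Q t) \<le> Suc t \<and> (\<forall>n. (\<Sum>h<n. of_nat h ^ t) = poly (Q t) (of_nat n))"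
    by metis
  define q where
    "q = smult (1 / of_nat (Suc s)) (monom 1 (Suc s) - (\<Sum>t<s. smult (of_nat (Suc s choose t)) (Q t)))"
  have "degree (\<Sum>t<s. smult (of_nat (Suc s choose t)) (Q t)) \<le> Suc s"
  proof (intro degree_sum_le)
    fix t assume "t \<in> {..<s}"
    then have "degree (Q t) \<le> Suc s" using Q [of t] by simp
    then show "degree (smult (of_nat (Suc s choose t)) (Q t)) \<le> Suc s"
      using degree_smult_le order.trans by blast
  qed simp
  then have "degree q \<le> Suc s"
    unfolding q_def by (intro order.trans [OF degree_smult_le] degree_diff_le) (simp_all add: degree_monom_le)
  moreover have "(\<Sum>h<n. of_nat h ^ s) = poly q (of_nat n)" for n
  proof -
    have "(of_nat n :: 'a) ^ Suc s
        = of_nat (Suc s) * (\<Sum>h<n. of_nat h ^ s) + (\<Sum>t<s. of_nat (Suc s choose t) * poly (Q t) (of_nat n))"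
      using Q by (simp add: power_Suc_eq_sum_power_sums lessThan_Suc_atMost [symmetric] del: power_Suc)
    then show ?thesis
      unfolding q_def by (simp add: poly_monom poly_sum field_simps del: of_nat_Suc)
  qed
  ultimately show ?case by blast
qed

lemma tail_sum_powers_polynomial:
  "\<exists>q :: 'a::field_char_0 poly. degree q \<le> Suc s \<and> (\<forall>y\<le>X. (\<Sum>h\<in>{y+1..X}. of_nat h ^ s) = poly q (of_nat y))"
proof -
  obtain q :: "'a poly" where q: "degree q \<le> Suc s" "\<And>n. (\<Sum>h<n. of_nat h ^ s) = poly q (of_nat n)"
    using sum_powers_polynomial by blast
  define q' where "q' = [:poly q (of_nat (Suc X)):] - q \<circ>\<^sub>p [:1, 1:]"
  have "degree q' \<le> Suc s"
    unfolding q'_def using q(1) degree_pcompose_le [of q "[:1, 1:]"]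
    by (intro degree_diff_le) simp_all
  moreover have "(\<Sum>h\<in>{y+1..X}. of_nat h ^ s) = poly q' (of_nat y)" if "y \<le> X" for y
  proof -
    have "{..<Suc X} = {..<Suc y} \<union> {y+1..X}" "{..<Suc y} \<inter> {y+1..X} = {}"
      using that by auto
    then have "(\<Sum>h<Suc X. of_nat h ^ s) = (\<Sum>h<Suc y. of_nat h ^ s) + (\<Sum>h\<in>{y+1..X}. (of_nat h :: 'a) ^ s)"
      by (simp add: sum.union_disjoint)
    then show ?thesis
      unfolding q'_def q(2) by (simp add: poly_pcompose algebra_simps)
  qed
  ultimately show ?thesis by blast
qed

section \<open>Polynomials in rotated coordinates\<close>

definition box :: "nat \<Rightarrow> nat \<Rightarrow> nat list set" where
  "box k X = {x. length x = k \<and> (\<forall>j<k. x ! j \<le> X)}"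

definition rotated_monomial :: "nat \<Rightarrow> nat list \<Rightarrow> nat \<Rightarrow> nat list \<Rightarrow> real" where
  "rotated_monomial k is i x = (\<Prod>p\<leftarrow>is. real (x ! ((p + k - i) mod k)))"

text \<open>
  The parameter i is the summation index of E_poly; expressing f in the coordinates rotated
  by i is what lets the coefficients c be independent of i.
\<close>

definition rotated_poly :: "nat \<Rightarrow> nat \<Rightarrow> nat \<Rightarrow> (nat \<Rightarrow> nat list \<Rightarrow> real) \<Rightarrow> bool" where
  "rotated_poly k X m f \<longleftrightarrow> (\<exists>T :: (nat list \<times> (nat list \<Rightarrow> real)) list.
     (\<forall>(is, c) \<in> set T. length is \<le> m \<and> perm_invariant c) \<and>
     (\<forall>i<k. \<forall>x\<in>box k X. f i x = (\<Sum>(is, c) \<leftarrow> T. c x * rotated_monomial k is i x)))"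

lemma perm_invariant_const: "perm_invariant (\<lambda>x. c)"
  by (simp add: perm_invariant_def)

lemma perm_invariant_mult: "perm_invariant c \<Longrightarrow> perm_invariant d \<Longrightarrow> perm_invariant (\<lambda>x. c x * d x)"
  unfolding perm_invariant_def by metis

lemma rotated_poly_perm_invariant: "perm_invariant c \<Longrightarrow> rotated_poly k X 0 (\<lambda>i x. c x)"
  unfolding rotated_poly_def by (rule exI [of _ "[([], c)]"]) (simp add: rotated_monomial_def)

lemma rotated_poly_const: "rotated_poly k X 0 (\<lambda>i x. c)"
  by (rule rotated_poly_perm_invariant [OF perm_invariant_const])

lemma rotated_poly_coordinate: "rotated_poly k X 1 (\<lambda>i x. real (x ! ((a + k - i) mod k)))"
  unfolding rotated_poly_def
  by (rule exI [of _ "[([a], \<lambda>x. 1)]"]) (simp add: rotated_monomial_def perm_invariant_const)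

lemma rotated_poly_cong:
  assumes "rotated_poly k X m f" "\<And>i x. i < k \<Longrightarrow> x \<in> box k X \<Longrightarrow> g i x = f i x"
  shows "rotated_poly k X m g"
  using assms unfolding rotated_poly_def by simp

lemma rotated_poly_mono:
  assumes "rotated_poly k X m f" "m \<le> n"
  shows "rotated_poly k X n f"
  using assms unfolding rotated_poly_def by fastforce

lemma rotated_poly_add:
  assumes "rotated_poly k X m f" "rotated_poly k X m g"
  shows "rotated_poly k X m (\<lambda>i x. f i x + g i x)"
proof -
  obtain T1 T2 where
    "\<forall>(is, c) \<in> set T1. length is \<le> m \<and> perm_invariant c"
    "\<forall>i<k. \<forall>x\<in>box k X. f i x = (\<Sum>(is, c) \<leftarrow> T1. c x * rotated_monomial k is i x)"
    "\<forall>(is, c) \<in> set T2. length is \<le> m \<and> perm_invariant c"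
    "\<forall>i<k. \<forall>x\<in>box k X. g i x = (\<Sum>(is, c) \<leftarrow> T2. c x * rotated_monomial k is i x)"
    using assms unfolding rotated_poly_def by blast
  then show ?thesis
    unfolding rotated_poly_def by (intro exI [of _ "T1 @ T2"]) auto
qed

lemma sum_list_mult_sum_list:
  fixes F :: "'a \<Rightarrow> 'c::comm_semiring_0" and G :: "'b \<Rightarrow> 'c"
  shows "(\<Sum>u\<leftarrow>us. F u) * (\<Sum>v\<leftarrow>vs. G v) = (\<Sum>(u, v)\<leftarrow>List.product us vs. F u * G v)"
  by (induction us) (simp_all add: algebra_simps sum_list_const_mult o_def)

lemma rotated_poly_mult:
  assumes "rotated_poly k X m f" "rotated_poly k X n g"
  shows "rotated_poly k X (m + n) (\<lambda>i x. f i x * g i x)"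
proof -
  obtain T1 T2 where
    T1: "\<forall>(is, c) \<in> set T1. length is \<le> m \<and> perm_invariant c"
        "\<forall>i<k. \<forall>x\<in>box k X. f i x = (\<Sum>(is, c) \<leftarrow> T1. c x * rotated_monomial k is i x)" and
    T2: "\<forall>(is, c) \<in> set T2. length is \<le> n \<and> perm_invariant c"
        "\<forall>i<k. \<forall>x\<in>box k X. g i x = (\<Sum>(is, c) \<leftarrow> T2. c x * rotated_monomial k is i x)"
    using assms unfolding rotated_poly_def by blast
  define T where
    "T = map (\<lambda>((is1, c1), (is2, c2)). (is1 @ is2, \<lambda>x. c1 x * c2 x)) (List.product T1 T2)"
  have "\<forall>(is, c) \<in> set T. length is \<le> m + n \<and> perm_invariant c"
    using T1(1) T2(1) by (fastforce simp: T_def intro: perm_invariant_mult add_mono)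
  moreover have "f i x * g i x = (\<Sum>(is, c) \<leftarrow> T. c x * rotated_monomial k is i x)"
    if "i < k" "x \<in> box k X" for i x
    using that T1(2) T2(2)
    by (simp add: sum_list_mult_sum_list T_def o_def split_def rotated_monomial_def mult_ac)
  ultimately show ?thesis
    unfolding rotated_poly_def by blast
qed

lemma rotated_poly_sum:
  assumes "finite A" "\<And>a. a \<in> A \<Longrightarrow> rotated_poly k X m (f a)"
  shows "rotated_poly k X m (\<lambda>i x. \<Sum>a\<in>A. f a i x)"
  using assms
proof (induction A rule: finite_induct)
  case empty
  show ?case
    using rotated_poly_mono [OF rotated_poly_const [of k X 0]] by simp
next
  case (insert a A)
  then show ?case
    using rotated_poly_add [of k X m "f a" "\<lambda>i x. \<Sum>a\<in>A. f a i x"] by simp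
qed

lemma rotated_poly_coordinate_power: "rotated_poly k X e (\<lambda>i x. real (x ! ((a + k - i) mod k)) ^ e)"
proof (induction e)
  case 0
  show ?case using rotated_poly_const [of k X 1] by simp
next
  case (Suc e)
  show ?case
    using rotated_poly_mult [OF rotated_poly_coordinate Suc] by simp
qed

lemma rotated_poly_weighted_poly_coordinates:
  fixes q :: "real poly"
  assumes "degree q \<le> n"
  shows "rotated_poly k X n (\<lambda>i x. \<Sum>a<k. w a * poly q (real (x ! ((a + k - i) mod k))))"
proof -
  have "rotated_poly k X n (\<lambda>i x. \<Sum>a<k. \<Sum>e\<le>degree q. (w a * coeff q e) * real (x ! ((a + k - i) mod k)) ^ e)"
  proof (intro rotated_poly_sum)
    fix a e assume "e \<in> {..degree q}"
    have "rotated_poly k X (0 + e) (\<lambda>i x. (w a * coeff q e) * real (x ! ((a + k - i) mod k)) ^ e)"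
      by (rule rotated_poly_mult [OF rotated_poly_const rotated_poly_coordinate_power])
    moreover have "0 + e \<le> n" using \<open>e \<in> {..degree q}\<close> assms by simp
    ultimately show "rotated_poly k X n (\<lambda>i x. (w a * coeff q e) * real (x ! ((a + k - i) mod k)) ^ e)"
      by (rule rotated_poly_mono)
  qed simp_all
  then show ?thesis
    by (rule rotated_poly_cong) (simp add: poly_altdef sum_distrib_left mult.assoc)
qed

lemma rotated_poly_symmetric_sum: "rotated_poly k X 0 (\<lambda>i x. \<Sum>j<k. g (x ! j))"
proof -
  have "perm_invariant (\<lambda>x. \<Sum>y\<leftarrow>x. g y)"
    unfolding perm_invariant_def by (metis mset_map sum_mset_sum_list)
  then show ?thesis
    by (rule rotated_poly_cong [OF rotated_poly_perm_invariant])
      (simp add: box_def sum_list_sum_nth atLeast0LessThan)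
qed

lemma sum_rotate:
  fixes i k :: nat
  assumes "i < k"
  shows "(\<Sum>j<k. F ((j + i) mod k) j) = (\<Sum>a<k. F a ((a + k - i) mod k))"
proof -
  have rotate_back: "((a + k - i) mod k + i) mod k = a" if "a < k" for a
  proof -
    have "a + k - i + i = a + k" using assms by arith
    then show ?thesis using that by (simp add: mod_add_left_eq)
  qed
  have rotate_forth: "((j + i) mod k + k - i) mod k = j" if "j < k" for j
  proof -
    have "(j + i) mod k + k - i = (j + i) mod k + (k - i)" "j + i + (k - i) = j + k"
      using assms by arith+
    then show ?thesis using that by (simp only: mod_add_left_eq) simp
  qed
  show ?thesis
    by (rule sum.reindex_bij_witness [where i = "\<lambda>a. (a + k - i) mod k" and j = "\<lambda>j. (j + i) mod k"])
      (use assms in \<open>simp_all add: rotate_back rotate_forth\<close>)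
qed

lemma sum_rotated_monomial: "(\<Sum>i<k. rotated_monomial k is i x) = cyc_stat k is x"
  unfolding cyc_stat_def
proof (rule sum.reindex_bij_witness [where i = "\<lambda>j. (k - j) mod k" and j = "\<lambda>i. (k - i) mod k"])
  fix i assume "i \<in> {..<k}"
  then show "(\<Prod>l<length is. real (x ! ((is ! l + (k - i) mod k) mod k))) = rotated_monomial k is i x"
    by (simp add: rotated_monomial_def prod.list_conv_set_nth atLeast0LessThan mod_add_right_eq)
qed (auto simp: mod_if)

lemma rotated_poly_sum_rotations:
  assumes "rotated_poly k X m f"
  shows "\<exists>T :: (nat list \<times> (nat list \<Rightarrow> real)) list.
           (\<forall>(is, c) \<in> set T. length is \<le> m \<and> perm_invariant c) \<and>
           (\<forall>x\<in>box k X. (\<Sum>i<k. f i x) = (\<Sum>(is, c) \<leftarrow> T. c x * cyc_stat k is x))"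
proof -
  obtain T where T: "\<forall>(is, c) \<in> set T. length is \<le> m \<and> perm_invariant c"
    "\<forall>i<k. \<forall>x\<in>box k X. f i x = (\<Sum>(is, c) \<leftarrow> T. c x * rotated_monomial k is i x)"
    using assms unfolding rotated_poly_def by blast
  have "(\<Sum>i<k. f i x) = (\<Sum>(is, c) \<leftarrow> T. c x * cyc_stat k is x)" if "x \<in> box k X" for x
  proof -
    have "(\<Sum>i<k. f i x) = (\<Sum>i<k. \<Sum>(is, c) \<leftarrow> T. c x * rotated_monomial k is i x)"
      using T(2) that by simp
    also have "\<dots> = (\<Sum>(is, c) \<leftarrow> T. c x * (\<Sum>i<k. rotated_monomial k is i x))"
      by (induction T) (simp_all add: sum.distrib split_def sum_distrib_left)
    finally show ?thesis
      by (simp add: sum_rotated_monomial)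
  qed
  with T(1) show ?thesis by blast
qed

section \<open>The coefficients of E_poly\<close>

definition factor_consts :: "nat \<Rightarrow> nat \<Rightarrow> (nat \<Rightarrow> real) \<Rightarrow> nat \<Rightarrow> nat list \<Rightarrow> real list" where
  "factor_consts k X b i x =
     concat (map (\<lambda>j. map (\<lambda>h. real h - b ((j + i) mod k)) [x ! j + 1..<X + 1]) [0..<k])"

lemma prod_list_concat: "prod_list (concat xss) = (\<Prod>xs\<leftarrow>xss. prod_list xs)"
  by (induction xss) simp_all

lemma E_poly_eq_sum_prod_factor_consts:
  "E_poly k X b x = (\<Sum>i<k. \<Prod>a\<leftarrow>factor_consts k X b i x. [:a, 1:])"
  unfolding E_poly_def factor_consts_def
  by (simp add: map_concat prod_list_concat o_def prod.distinct_set_conv_list [symmetric]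
      atLeastLessThanSuc_atLeastAtMost atLeast0LessThan del: upt_Suc)

lemma length_factor_consts: "length (factor_consts k X b i x) = L_deg k X x"
  unfolding factor_consts_def L_deg_def
  by (simp add: length_concat o_def interv_sum_list_conv_sum_set_nat atLeast0LessThan del: upt_Suc)

lemma psum_factor_consts:
  "psum (factor_consts k X b i x) r = (\<Sum>j<k. \<Sum>h\<in>{x ! j + 1..X}. (real h - b ((j + i) mod k)) ^ r)"
  unfolding factor_consts_def psum_concat
  by (simp add: psum_def o_def interv_sum_list_conv_sum_set_nat
      atLeastLessThanSuc_atLeastAtMost atLeast0LessThan del: upt_Suc)

lemma rotated_poly_psum_factor_consts:
  "rotated_poly k X r (\<lambda>i x. psum (factor_consts k X b i x) r)"
proof -
  define tail where "tail s y = (\<Sum>h\<in>{y + 1..X}. real h ^ s)" for s y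
  define part where
    "part s i x = (\<Sum>j<k. of_nat (r choose s) * (- b ((j + i) mod k)) ^ (r - s) * tail s (x ! j))" for s i x
  have expand: "psum (factor_consts k X b i x) r = (\<Sum>s\<le>r. part s i x)" for i x
  proof -
    have "psum (factor_consts k X b i x) r = (\<Sum>j<k. \<Sum>h\<in>{x ! j + 1..X}. \<Sum>s\<le>r.
            of_nat (r choose s) * real h ^ s * (- b ((j + i) mod k)) ^ (r - s))"
      unfolding psum_factor_consts using binomial_ring [of "real _" "- b _" r] by simp
    also have "\<dots> = (\<Sum>s\<le>r. part s i x)"
      unfolding part_def tail_def
      by (simp add: sum.swap [where B = "{..r}"] sum_distrib_left sum_distrib_right mult_ac)
    finally show ?thesis .
  qed
  have "rotated_poly k X r (part s)" if "s \<le> r" for s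
  proof (cases "s = r")
    case True
    \<comment> \<open>The b-weight (- b)^0 is 1, so this term is symmetric in x; Faulhaber's degree r + 1
      would be one too many here.\<close>
    have "rotated_poly k X r (\<lambda>i x. \<Sum>j<k. tail r (x ! j))"
      using rotated_poly_symmetric_sum by (rule rotated_poly_mono) simp
    then show ?thesis
      by (rule rotated_poly_cong) (simp add: part_def True)
  next
    case False
    obtain q :: "real poly" where q: "degree q \<le> Suc s" "\<And>y. y \<le> X \<Longrightarrow> tail s y = poly q (real y)"
      using tail_sum_powers_polynomial [of s X] unfolding tail_def by blast
    define w where "w a = of_nat (r choose s) * (- b a) ^ (r - s)" for a
    have "rotated_poly k X r (\<lambda>i x. \<Sum>a<k. w a * poly q (real (x ! ((a + k - i) mod k))))"
      using q(1) False that by (intro rotated_poly_weighted_poly_coordinates) simp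
    then show ?thesis
    proof (rule rotated_poly_cong)
      fix i x assume "i < k" "x \<in> box k X"
      then have "part s i x = (\<Sum>j<k. w ((j + i) mod k) * poly q (real (x ! j)))"
        unfolding part_def w_def by (intro sum.cong) (simp_all add: box_def q(2))
      also have "\<dots> = (\<Sum>a<k. w a * poly q (real (x ! ((a + k - i) mod k))))"
        using \<open>i < k\<close> by (rule sum_rotate)
      finally show "part s i x = (\<Sum>a<k. w a * poly q (real (x ! ((a + k - i) mod k))))" .
    qed
  qed
  then have "rotated_poly k X r (\<lambda>i x. \<Sum>s\<le>r. part s i x)"
    by (intro rotated_poly_sum) auto
  then show ?thesis
    by (rule rotated_poly_cong) (simp add: expand)
qed

lemma rotated_poly_esym_factor_consts:
  "rotated_poly k X m (\<lambda>i x. esym (factor_consts k X b i x) m)"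
proof (induction m rule: less_induct)
  case (less m)
  show ?case
  proof (cases m)
    case 0
    then show ?thesis using rotated_poly_const [of k X 1] by simp
  next
    case (Suc n)
    have "rotated_poly k X (Suc n) (\<lambda>i x. \<Sum>r\<le>n. (-1) ^ r / real (Suc n)
            * esym (factor_consts k X b i x) (n - r) * psum (factor_consts k X b i x) (Suc r))"
    proof (rule rotated_poly_sum)
      fix r assume "r \<in> {..n}"
      have "rotated_poly k X (0 + (n - r) + Suc r) (\<lambda>i x. (-1) ^ r / real (Suc n)
              * esym (factor_consts k X b i x) (n - r) * psum (factor_consts k X b i x) (Suc r))"
        using Suc by (intro rotated_poly_mult rotated_poly_const less.IH rotated_poly_psum_factor_consts) simp
      then show "rotated_poly k X (Suc n) (\<lambda>i x. (-1) ^ r / real (Suc n)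
              * esym (factor_consts k X b i x) (n - r) * psum (factor_consts k X b i x) (Suc r))"
        using \<open>r \<in> {..n}\<close> by simp
    qed simp
    then show ?thesis
      unfolding Suc by (rule rotated_poly_cong) (simp only: esym_Suc_newton)
  qed
qed

lemma coeff_E_poly:
  "coeff (E_poly k X b x) n =
     (if n \<le> L_deg k X x then \<Sum>i<k. esym (factor_consts k X b i x) (L_deg k X x - n) else 0)"
  unfolding E_poly_eq_sum_prod_factor_consts coeff_sum
  by (simp add: coeff_prod_linear_factors length_factor_consts)

lemma degree_E_poly:
  assumes "k > 0"
  shows "degree (E_poly k X b x) = L_deg k X x"
proof (rule order.antisym)
  show "degree (E_poly k X b x) \<le> L_deg k X x"
    by (rule degree_le) (simp add: coeff_E_poly)
  show "L_deg k X x \<le> degree (E_poly k X b x)"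
    by (rule le_degree) (use assms in \<open>simp add: coeff_E_poly\<close>)
qed

lemma coeff_E_poly_from_top:
  "(if m \<le> L_deg k X x then coeff (E_poly k X b x) (L_deg k X x - m) else 0)
     = (\<Sum>i<k. esym (factor_consts k X b i x) m)"
  by (simp add: coeff_E_poly esym_eq_0 length_factor_consts)

theorem lemma5p2:
  fixes k xs :: nat and b :: "nat \<Rightarrow> real" and m :: nat
  assumes "k > 0" and "xs > 0"
  shows "(\<forall>x. length x = k \<and> (\<forall>j<k. x ! j \<le> xs) \<longrightarrow> degree (E_poly k xs b x) = L_deg k xs x)
    \<and> (\<exists>T :: (nat list \<times> (nat list \<Rightarrow> real)) list.
         (\<forall>(is, c) \<in> set T. length is \<le> m \<and> perm_invariant c) \<and>
         (\<forall>x. length x = k \<and> (\<forall>j<k. x ! j \<le> xs) \<longrightarrow>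
            (if m \<le> L_deg k xs x then coeff (E_poly k xs b x) (L_deg k xs x - m) else 0)
              = (\<Sum>(is, c) \<leftarrow> T. c x * cyc_stat k is x)))"
proof -
  obtain T :: "(nat list \<times> (nat list \<Rightarrow> real)) list" where
    "\<forall>(is, c) \<in> set T. length is \<le> m \<and> perm_invariant c"
    "\<forall>x\<in>box k xs. (\<Sum>i<k. esym (factor_consts k xs b i x) m) = (\<Sum>(is, c) \<leftarrow> T. c x * cyc_stat k is x)"
    using rotated_poly_sum_rotations [OF rotated_poly_esym_factor_consts] by blast
  then show ?thesis
    using degree_E_poly [OF assms(1)] unfolding coeff_E_poly_from_top box_def by blast
qed

end
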